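(* Let $0<b<1$, let $\mu,\nu$ be the Gibbs distributions of two soft-hardcore models $(G,\lambda^\mu),(G,\lambda^\nu)$ on $G=(V,E)$ with $n=|V|$, both $b$-marginally bounded, with $d_{\mathrm{par}}(\mu,\nu)\le\theta:=\frac{b}{2(1-b)n}$. Let $C=b^3$. Then: (i) for all $\sigma$, $\mu(\sigma)=0$ implies $\nu(\sigma)=0$; (ii) $\sqrt{\mathrm{Var}[W]}\le K\,d_{TV}(\mu,\nu)$ with $K=\frac{4n}{bC}$; (iii) $\mathbb{E}[W]\ge\frac1L$ with $L=2$; where $W=\frac{w_\nu(\sigma)}{w_\mu(\sigma)}$ with $\sigma\sim\mu$.
   Context: Hardcore model $(G,\lambda)$: weight $w(\sigma)=\prod_{v:\sigma_v=+1}\lambda_v$ for $\sigma\in\{-1,+1\}^V$ with $\{v:\sigma_v=+1\}$ independent in $G$, else $0$; Gibbs distribution is $w/Z$. Soft: $\lambda_v>0$ for all $v$. $d_{\mathrm{par}}(\mu,\nu)=\max_v|\lambda^\mu_v-\lambda^\nu_v|$. $b$-marginally bounded: for every $\Lambda\subseteq V$, feasible $\sigma\in\{\pm1\}^\Lambda$, $v\in V$, $c\in\{\pm1\}$, $\mu^\sigma_v(c)>0$ implies $\mu^\sigma_v(c)\ge b$ ($\mu^\sigma_v$ = marginal at $v$ of $\mu$ conditioned on $\sigma$). *)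

theory Defs
  imports "HOL-Analysis.Analysis"
begin

definition configs :: "'a set \<Rightarrow> ('a \<Rightarrow> int) set" where
  "configs V = PiE V (\<lambda>_. {-1, 1})"

definition occupied :: "'a set \<Rightarrow> ('a \<Rightarrow> int) \<Rightarrow> 'a set" where
  "occupied V \<sigma> = {v \<in> V. \<sigma> v = 1}"

definition independent :: "('a \<Rightarrow> 'a \<Rightarrow> bool) \<Rightarrow> 'a set \<Rightarrow> bool" where
  "independent E S \<longleftrightarrow> (\<forall>u\<in>S. \<forall>v\<in>S. \<not> E u v)"

definition hc_weight :: "'a set \<Rightarrow> ('a \<Rightarrow> 'a \<Rightarrow> bool) \<Rightarrow> ('a \<Rightarrow> real) \<Rightarrow> ('a \<Rightarrow> int) \<Rightarrow> real" where
  "hc_weight V E lam \<sigma> =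
     (if independent E (occupied V \<sigma>) then (\<Prod>v\<in>occupied V \<sigma>. lam v) else 0)"

definition partition_fn :: "'a set \<Rightarrow> ('a \<Rightarrow> 'a \<Rightarrow> bool) \<Rightarrow> ('a \<Rightarrow> real) \<Rightarrow> real" where
  "partition_fn V E lam = (\<Sum>\<sigma>\<in>configs V. hc_weight V E lam \<sigma>)"

definition gibbs :: "'a set \<Rightarrow> ('a \<Rightarrow> 'a \<Rightarrow> bool) \<Rightarrow> ('a \<Rightarrow> real) \<Rightarrow> ('a \<Rightarrow> int) \<Rightarrow> real" where
  "gibbs V E lam \<sigma> = hc_weight V E lam \<sigma> / partition_fn V E lam"

definition soft :: "'a set \<Rightarrow> ('a \<Rightarrow> real) \<Rightarrow> bool" where
  "soft V lam \<longleftrightarrow> (\<forall>v\<in>V. lam v > 0)"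

definition prob_ev :: "'a set \<Rightarrow> (('a \<Rightarrow> int) \<Rightarrow> real) \<Rightarrow> (('a \<Rightarrow> int) \<Rightarrow> bool) \<Rightarrow> real" where
  "prob_ev V p P = (\<Sum>\<sigma>\<in>{\<sigma>\<in>configs V. P \<sigma>}. p \<sigma>)"

definition agrees :: "'a set \<Rightarrow> ('a \<Rightarrow> int) \<Rightarrow> ('a \<Rightarrow> int) \<Rightarrow> bool" where
  "agrees \<Lambda> \<tau> \<sigma> \<longleftrightarrow> (\<forall>u\<in>\<Lambda>. \<sigma> u = \<tau> u)"

definition feasible :: "'a set \<Rightarrow> (('a \<Rightarrow> int) \<Rightarrow> real) \<Rightarrow> 'a set \<Rightarrow> ('a \<Rightarrow> int) \<Rightarrow> bool" where
  "feasible V p \<Lambda> \<tau> \<longleftrightarrow> prob_ev V p (agrees \<Lambda> \<tau>) > 0"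

definition cond_marginal ::
  "'a set \<Rightarrow> (('a \<Rightarrow> int) \<Rightarrow> real) \<Rightarrow> 'a set \<Rightarrow> ('a \<Rightarrow> int) \<Rightarrow> 'a \<Rightarrow> int \<Rightarrow> real" where
  "cond_marginal V p \<Lambda> \<tau> v c =
     prob_ev V p (\<lambda>\<sigma>. agrees \<Lambda> \<tau> \<sigma> \<and> \<sigma> v = c) / prob_ev V p (agrees \<Lambda> \<tau>)"

definition marginally_bounded :: "'a set \<Rightarrow> (('a \<Rightarrow> int) \<Rightarrow> real) \<Rightarrow> real \<Rightarrow> bool" where
  "marginally_bounded V p b \<longleftrightarrow>
     (\<forall>\<Lambda> \<tau> v c. \<Lambda> \<subseteq> V \<longrightarrow> \<tau> \<in> PiE \<Lambda> (\<lambda>_. {-1, 1}) \<longrightarrow> feasible V p \<Lambda> \<tau> \<longrightarrow>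
        v \<in> V \<longrightarrow> c \<in> {-1, 1} \<longrightarrow>
        cond_marginal V p \<Lambda> \<tau> v c > 0 \<longrightarrow> cond_marginal V p \<Lambda> \<tau> v c \<ge> b)"

definition d_par :: "'a set \<Rightarrow> ('a \<Rightarrow> real) \<Rightarrow> ('a \<Rightarrow> real) \<Rightarrow> real" where
  "d_par V lam1 lam2 = Max ((\<lambda>v. \<bar>lam1 v - lam2 v\<bar>) ` V)"

definition d_tv :: "'a set \<Rightarrow> (('a \<Rightarrow> int) \<Rightarrow> real) \<Rightarrow> (('a \<Rightarrow> int) \<Rightarrow> real) \<Rightarrow> real" where
  "d_tv V p q = (1/2) * (\<Sum>\<sigma>\<in>configs V. \<bar>p \<sigma> - q \<sigma>\<bar>)"

text \<open>Expectation and variance of a random variable X with sigma ~ p, summed over the support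
  of p (X need only be defined there).\<close>
definition expect :: "'a set \<Rightarrow> (('a \<Rightarrow> int) \<Rightarrow> real) \<Rightarrow> (('a \<Rightarrow> int) \<Rightarrow> real) \<Rightarrow> real" where
  "expect V p X = (\<Sum>\<sigma>\<in>{\<sigma>\<in>configs V. p \<sigma> > 0}. p \<sigma> * X \<sigma>)"

definition variance :: "'a set \<Rightarrow> (('a \<Rightarrow> int) \<Rightarrow> real) \<Rightarrow> (('a \<Rightarrow> int) \<Rightarrow> real) \<Rightarrow> real" where
  "variance V p X = expect V p (\<lambda>\<sigma>. (X \<sigma> - expect V p X)^2)"

end

theory Submission
  imports Defs
begin

(* Pinning every vertex other than v to be unoccupied, b-marginal boundedness gives
   b/(1-b) <= lambda_v <= (1-b)/b; with nothing pinned it gives mu(sigma_v = +1) >= b.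
   Making v unoccupied maps the configurations with sigma_v = +1 injectively to the others and
   divides their weight by lambda_v, so comparing mu and nu on these pairs bounds
   |lambda^nu_v / lambda^mu_v - 1| by 2 d_TV / b^2 <= d_TV / b^4 (as b <= 1/2), while the d_par
   hypothesis bounds it by 1/(2n). On the support of mu, W is the product of these ratios over
   the occupied vertices, hence W >= 1/2 and |W - 1| <= 2n delta; this gives the bounds on the
   expectation and on the variance of W. *)

lemma finite_configs: "finite V \<Longrightarrow> finite (configs V)"
  unfolding configs_def by (rule finite_PiE) auto

lemma occupied_subset: "occupied V \<sigma> \<subseteq> V"
  by (auto simp: occupied_def)

lemma hc_weight_nonneg: "soft V lam \<Longrightarrow> 0 \<le> hc_weight V E lam \<sigma>"
  unfolding hc_weight_def soft_def occupied_def by (auto intro!: prod_nonneg simp: less_imp_le)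

lemma hc_weight_pos_iff:
  assumes "soft V lam"
  shows "0 < hc_weight V E lam \<sigma> \<longleftrightarrow> independent E (occupied V \<sigma>)"
proof -
  have "0 < (\<Prod>v\<in>occupied V \<sigma>. lam v)"
    using assms by (intro prod_pos) (auto simp: soft_def occupied_def)
  then show ?thesis by (simp add: hc_weight_def)
qed

lemma hc_weight_ratio:
  assumes "independent E (occupied V \<sigma>)"
  shows "hc_weight V E lam2 \<sigma> / hc_weight V E lam1 \<sigma> = (\<Prod>v\<in>occupied V \<sigma>. lam2 v / lam1 v)"
  using assms by (simp add: hc_weight_def prod_dividef)

definition empty_config :: "'a set \<Rightarrow> 'a \<Rightarrow> int" where
  "empty_config V = restrict (\<lambda>_. -1) V"

lemma empty_config_in_configs: "empty_config V \<in> configs V"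
  by (simp add: empty_config_def configs_def)

lemma empty_config_upd_in_configs: "v \<in> V \<Longrightarrow> (empty_config V)(v := 1) \<in> configs V"
  by (auto simp: empty_config_def configs_def PiE_iff extensional_def)

lemma hc_weight_empty_config: "hc_weight V E lam (empty_config V) = 1"
  by (simp add: hc_weight_def occupied_def empty_config_def independent_def)

lemma hc_weight_empty_config_upd:
  assumes "v \<in> V" "\<not> E v v"
  shows "hc_weight V E lam ((empty_config V)(v := 1)) = lam v"
proof -
  have "occupied V ((empty_config V)(v := 1)) = {v}"
    using assms(1) by (auto simp: occupied_def empty_config_def)
  then show ?thesis using assms(2) by (simp add: hc_weight_def independent_def)
qed

lemma partition_fn_ge_1:
  assumes "finite V" "soft V lam"
  shows "1 \<le> partition_fn V E lam"
proof -
  have "hc_weight V E lam (empty_config V) \<le> partition_fn V E lam"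
    unfolding partition_fn_def using assms
    by (intro member_le_sum) (auto simp: empty_config_in_configs hc_weight_nonneg finite_configs)
  then show ?thesis by (simp add: hc_weight_empty_config)
qed

lemma gibbs_nonneg: "finite V \<Longrightarrow> soft V lam \<Longrightarrow> 0 \<le> gibbs V E lam \<sigma>"
  unfolding gibbs_def using partition_fn_ge_1[of V lam E] hc_weight_nonneg[of V lam E \<sigma>] by simp

lemma gibbs_eq_0_iff:
  "finite V \<Longrightarrow> soft V lam \<Longrightarrow> gibbs V E lam \<sigma> = 0 \<longleftrightarrow> \<not> independent E (occupied V \<sigma>)"
  unfolding gibbs_def using partition_fn_ge_1[of V lam E] hc_weight_pos_iff[of V lam E \<sigma>]
    hc_weight_nonneg[of V lam E \<sigma>]
  by auto

lemma sum_gibbs: "finite V \<Longrightarrow> soft V lam \<Longrightarrow> (\<Sum>\<sigma>\<in>configs V. gibbs V E lam \<sigma>) = 1"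
  unfolding gibbs_def using partition_fn_ge_1[of V lam E]
  by (simp add: sum_divide_distrib[symmetric] partition_fn_def)

lemma gibbs_flip:
  assumes "finite V" "v \<in> V" "\<sigma> v = 1" and ind: "independent E (occupied V \<sigma>)"
  shows "gibbs V E lam \<sigma> = lam v * gibbs V E lam (\<sigma>(v := -1))"
proof -
  have occ: "occupied V (\<sigma>(v := -1)) = occupied V \<sigma> - {v}"
    by (auto simp: occupied_def)
  have "v \<in> occupied V \<sigma>"
    using assms by (simp add: occupied_def)
  moreover have "finite (occupied V \<sigma>)"
    using assms(1) occupied_subset by (rule finite_subset[rotated])
  moreover have "independent E (occupied V (\<sigma>(v := -1)))"
    using ind unfolding occ independent_def by blast
  ultimately show ?thesis
    using ind by (simp add: gibbs_def hc_weight_def occ prod.remove)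
qed

lemma configs_agreeing_empty_off:
  assumes v: "v \<in> V"
  shows "{\<sigma>\<in>configs V. agrees (V - {v}) (empty_config (V - {v})) \<sigma>}
           = {empty_config V, (empty_config V)(v := 1)}" (is "?A = _")
proof (intro equalityI subsetI)
  fix \<sigma> assume "\<sigma> \<in> ?A"
  then have "\<sigma> \<in> configs V" and off: "\<forall>u\<in>V - {v}. \<sigma> u = -1"
    by (auto simp: agrees_def empty_config_def)
  then have "\<forall>u. u \<notin> V \<longrightarrow> \<sigma> u = undefined" and "\<sigma> v \<in> {-1, 1}"
    using v by (auto simp: configs_def PiE_iff extensional_def)
  with off have "\<sigma> = (if \<sigma> v = 1 then (empty_config V)(v := 1) else empty_config V)"
    by (auto simp: empty_config_def fun_eq_iff)
  then show "\<sigma> \<in> {empty_config V, (empty_config V)(v := 1)}"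
    by (metis insertI1 insertI2 singletonI)
next
  fix \<sigma> assume "\<sigma> \<in> {empty_config V, (empty_config V)(v := 1)}"
  then show "\<sigma> \<in> ?A"
    using v empty_config_in_configs empty_config_upd_in_configs
    by (auto simp: agrees_def empty_config_def split: if_splits)
qed

lemma prob_ev_agreeing_empty_off:
  assumes v: "v \<in> V"
  defines "\<tau> \<equiv> empty_config (V - {v})"
  shows "prob_ev V p (agrees (V - {v}) \<tau>) = p (empty_config V) + p ((empty_config V)(v := 1))"
    and "prob_ev V p (\<lambda>\<sigma>. agrees (V - {v}) \<tau> \<sigma> \<and> \<sigma> v = 1) = p ((empty_config V)(v := 1))"
    and "prob_ev V p (\<lambda>\<sigma>. agrees (V - {v}) \<tau> \<sigma> \<and> \<sigma> v = -1) = p (empty_config V)"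
proof -
  have vals: "empty_config V v = -1" "((empty_config V)(v := 1)) v = 1"
    using v by (simp_all add: empty_config_def)
  then have "empty_config V \<noteq> (empty_config V)(v := 1)"
    by (metis one_neq_neg_one)
  moreover have "{\<sigma>\<in>configs V. agrees (V - {v}) \<tau> \<sigma> \<and> \<sigma> v = c}
                   = {\<sigma>\<in>{empty_config V, (empty_config V)(v := 1)}. \<sigma> v = c}" for c
    unfolding configs_agreeing_empty_off[OF v, folded \<tau>_def, symmetric] by blast
  then have "{\<sigma>\<in>configs V. agrees (V - {v}) \<tau> \<sigma> \<and> \<sigma> v = 1} = {(empty_config V)(v := 1)}"
    and "{\<sigma>\<in>configs V. agrees (V - {v}) \<tau> \<sigma> \<and> \<sigma> v = -1} = {empty_config V}"
    using vals by auto
  ultimately show "prob_ev V p (agrees (V - {v}) \<tau>) = p (empty_config V) + p ((empty_config V)(v := 1))"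
    and "prob_ev V p (\<lambda>\<sigma>. agrees (V - {v}) \<tau> \<sigma> \<and> \<sigma> v = 1) = p ((empty_config V)(v := 1))"
    and "prob_ev V p (\<lambda>\<sigma>. agrees (V - {v}) \<tau> \<sigma> \<and> \<sigma> v = -1) = p (empty_config V)"
    using configs_agreeing_empty_off[OF v] unfolding prob_ev_def \<tau>_def by simp_all
qed

lemma marginally_bounded_activity_bounds:
  assumes "finite V" "\<And>v. \<not> E v v" "soft V lam"
    and mb: "marginally_bounded V (gibbs V E lam) b" and v: "v \<in> V"
  shows "b * (1 + lam v) \<le> lam v" and "b * (1 + lam v) \<le> 1"
proof -
  define p where "p = gibbs V E lam"
  define Z where "Z = partition_fn V E lam"
  define \<tau> where "\<tau> = empty_config (V - {v})"
  have Z: "1 \<le> Z" unfolding Z_def using assms(1,3) by (rule partition_fn_ge_1)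
  have lam: "0 < lam v" using assms(3) v by (simp add: soft_def)
  have p0: "p (empty_config V) = 1 / Z" and p1: "p ((empty_config V)(v := 1)) = lam v / Z"
    by (simp_all add: p_def Z_def gibbs_def hc_weight_empty_config hc_weight_empty_config_upd v assms(2))
  note pev = prob_ev_agreeing_empty_off[OF v, of p, folded \<tau>_def]
  have feas: "feasible V p (V - {v}) \<tau>"
    using Z lam by (simp add: feasible_def pev p0 p1 add_divide_distrib[symmetric])
  have "\<tau> \<in> PiE (V - {v}) (\<lambda>_. {-1, 1})"
    by (simp add: \<tau>_def empty_config_def)
  then have bound: "b \<le> cond_marginal V p (V - {v}) \<tau> v c"
    if "c \<in> {-1, 1}" "0 < cond_marginal V p (V - {v}) \<tau> v c" for c
    using mb feas v that unfolding marginally_bounded_def p_def by blast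
  have "cond_marginal V p (V - {v}) \<tau> v 1 = lam v / (1 + lam v)"
    and "cond_marginal V p (V - {v}) \<tau> v (-1) = 1 / (1 + lam v)"
    using Z lam by (simp_all add: cond_marginal_def pev p0 p1 add_divide_distrib[symmetric])
  with bound[of 1] bound[of "-1"] lam
  show "b * (1 + lam v) \<le> lam v" and "b * (1 + lam v) \<le> 1"
    by (simp_all add: field_simps)
qed

lemma marginally_bounded_occupation:
  assumes finV: "finite V" and "\<And>v. \<not> E v v" and soft: "soft V lam"
    and mb: "marginally_bounded V (gibbs V E lam) b" and v: "v \<in> V"
  shows "b \<le> prob_ev V (gibbs V E lam) (\<lambda>\<sigma>. \<sigma> v = 1)"
proof -
  define p where "p = gibbs V E lam"
  define \<tau> :: "'a \<Rightarrow> int" where "\<tau> = (\<lambda>_. undefined)"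
  have no_pinning: "agrees {} \<tau> = (\<lambda>_. True)"
    by (simp add: agrees_def fun_eq_iff)
  have total: "prob_ev V p (\<lambda>_. True) = 1"
    using sum_gibbs[OF finV soft] by (simp add: no_pinning prob_ev_def p_def)
  have mem: "(empty_config V)(v := 1) \<in> {\<sigma>\<in>configs V. \<sigma> v = 1}"
    using empty_config_upd_in_configs[OF v] by simp
  have "0 < p ((empty_config V)(v := 1))"
    using partition_fn_ge_1[OF finV soft, of E] soft v assms(2)
    by (simp add: p_def gibbs_def hc_weight_empty_config_upd soft_def)
  also have "\<dots> \<le> prob_ev V p (\<lambda>\<sigma>. \<sigma> v = 1)"
    unfolding prob_ev_def p_def using finV soft
    by (intro member_le_sum[OF mem]) (auto simp: gibbs_nonneg finite_configs)
  finally have "0 < cond_marginal V p {} \<tau> v 1"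
    by (simp add: cond_marginal_def total no_pinning)
  moreover have "\<tau> \<in> PiE {} (\<lambda>_. {-1, 1})"
    by (simp add: \<tau>_def)
  moreover have "feasible V p {} \<tau>"
    by (simp add: feasible_def total no_pinning)
  ultimately have "b \<le> cond_marginal V p {} \<tau> v 1"
    using mb v unfolding marginally_bounded_def p_def by blast
  then show ?thesis
    by (simp add: cond_marginal_def total no_pinning flip: p_def)
qed

lemma abs_activity_diff_le:
  fixes l1 l2 m m' n n' K :: real
  assumes "m = l1 * m'" "n = l2 * n'" "0 \<le> m'" "0 \<le> l2" "l2 \<le> K" "1 \<le> K"
  shows "\<bar>l2 - l1\<bar> * m' \<le> K * (\<bar>m - n\<bar> + \<bar>m' - n'\<bar>)"
proof -
  have "(l2 - l1) * m' = (n - m) - l2 * (n' - m')"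
    using assms(1,2) by (simp add: algebra_simps)
  then have "\<bar>l2 - l1\<bar> * m' = \<bar>(n - m) - l2 * (n' - m')\<bar>"
    using assms(3) by (metis abs_mult abs_of_nonneg)
  also have "\<dots> \<le> \<bar>m - n\<bar> + l2 * \<bar>m' - n'\<bar>"
    using abs_triangle_ineq4[of "n - m" "l2 * (n' - m')"] assms(4)
    by (simp add: abs_mult abs_minus_commute)
  also have "\<dots> \<le> K * \<bar>m - n\<bar> + K * \<bar>m' - n'\<bar>"
    using assms(5,6) by (intro add_mono mult_right_mono) (auto intro: mult_right_mono[of 1 K, simplified])
  finally show ?thesis by (simp add: algebra_simps)
qed

lemma sum_flip_pairs_le_d_tv:
  assumes finV: "finite V" and v: "v \<in> V" and P: "P \<subseteq> {\<sigma>\<in>configs V. \<sigma> v = 1}"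
  shows "(\<Sum>\<sigma>\<in>P. \<bar>p \<sigma> - q \<sigma>\<bar> + \<bar>p (\<sigma>(v := -1)) - q (\<sigma>(v := -1))\<bar>) \<le> 2 * d_tv V p q"
proof -
  define f :: "('a \<Rightarrow> int) \<Rightarrow> 'a \<Rightarrow> int" where "f \<sigma> = \<sigma>(v := -1)" for \<sigma>
  define g where "g \<sigma> = \<bar>p \<sigma> - q \<sigma>\<bar>" for \<sigma>
  have finP: "finite P"
    using P finite_configs[OF finV] by (auto intro: finite_subset)
  have "inj_on f P"
  proof (rule inj_onI)
    fix \<sigma> \<sigma>' assume "\<sigma> \<in> P" "\<sigma>' \<in> P" "f \<sigma> = f \<sigma>'"
    then show "\<sigma> = \<sigma>'"
      using P unfolding f_def by (metis (mono_tags, lifting) fun_upd_triv fun_upd_upd mem_Collect_eq subsetD)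
  qed
  moreover have "P \<inter> f ` P = {}"
    using P by (auto simp: f_def)
  moreover have "f \<sigma> \<in> configs V" if "\<sigma> \<in> configs V" for \<sigma>
    using that v by (auto simp: f_def configs_def PiE_iff extensional_def)
  then have "f ` P \<subseteq> configs V"
    using P by auto
  ultimately have "(\<Sum>\<sigma>\<in>P. g \<sigma> + g (f \<sigma>)) = sum g (P \<union> f ` P)"
    using finP by (simp add: sum.distrib sum.union_disjoint sum.reindex)
  also have "\<dots> \<le> sum g (configs V)"
    using P \<open>f ` P \<subseteq> configs V\<close> finite_configs[OF finV]
    by (intro sum_mono2) (auto simp: g_def)
  finally show ?thesis
    by (simp add: d_tv_def f_def g_def)
qed

lemma activity_ratio_le_d_tv:
  assumes finV: "finite V" and irr: "\<And>v. \<not> E v v"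
    and soft1: "soft V lam1" and soft2: "soft V lam2"
    and mb1: "marginally_bounded V (gibbs V E lam1) b" and v: "v \<in> V"
    and b: "0 < b" "b \<le> 1" and lam2: "lam2 v \<le> 1 / b"
  shows "\<bar>lam2 v / lam1 v - 1\<bar> \<le> 2 * d_tv V (gibbs V E lam1) (gibbs V E lam2) / b\<^sup>2"
proof -
  define \<mu> where "\<mu> = gibbs V E lam1"
  define \<nu> where "\<nu> = gibbs V E lam2"
  define D where "D = d_tv V \<mu> \<nu>"
  define P where "P = {\<sigma>\<in>configs V. \<sigma> v = 1 \<and> independent E (occupied V \<sigma>)}"
  define \<mu>' where "\<mu>' \<sigma> = \<mu> (\<sigma>(v := -1))" for \<sigma>
  have lam: "0 < lam1 v" "0 < lam2 v"
    using soft1 soft2 v by (auto simp: soft_def)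
  have "prob_ev V \<mu> (\<lambda>\<sigma>. \<sigma> v = 1) = sum \<mu> P"
    unfolding prob_ev_def P_def using finite_configs[OF finV]
    by (intro sum.mono_neutral_right) (auto simp: \<mu>_def gibbs_def hc_weight_def)
  moreover have "sum \<mu> P = lam1 v * sum \<mu>' P"
    unfolding sum_distrib_left
    by (rule sum.cong) (auto simp: P_def \<mu>_def \<mu>'_def gibbs_flip[OF finV v])
  ultimately have mass: "b \<le> lam1 v * sum \<mu>' P"
    using marginally_bounded_occupation[OF finV irr soft1 mb1 v] by (simp add: \<mu>_def)
  have "\<bar>lam2 v - lam1 v\<bar> * sum \<mu>' P
          \<le> (\<Sum>\<sigma>\<in>P. 1 / b * (\<bar>\<mu> \<sigma> - \<nu> \<sigma>\<bar> + \<bar>\<mu> (\<sigma>(v := -1)) - \<nu> (\<sigma>(v := -1))\<bar>))"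
    unfolding sum_distrib_left
  proof (rule sum_mono)
    fix \<sigma> assume "\<sigma> \<in> P"
    then have "\<sigma> v = 1" "independent E (occupied V \<sigma>)"
      by (simp_all add: P_def)
    note flip = gibbs_flip[OF finV v this]
    have "1 \<le> 1 / b"
      using b by simp
    then show "\<bar>lam2 v - lam1 v\<bar> * \<mu>' \<sigma>
                 \<le> 1 / b * (\<bar>\<mu> \<sigma> - \<nu> \<sigma>\<bar> + \<bar>\<mu> (\<sigma>(v := -1)) - \<nu> (\<sigma>(v := -1))\<bar>)"
      unfolding \<mu>'_def \<mu>_def \<nu>_def
      using flip gibbs_nonneg[OF finV soft1] lam lam2 by (intro abs_activity_diff_le) auto
  qed
  also have "\<dots> \<le> 1 / b * (2 * D)"
    unfolding sum_distrib_left[symmetric] D_def using b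
    by (intro mult_left_mono sum_flip_pairs_le_d_tv[OF finV v]) (auto simp: P_def)
  finally have diff: "\<bar>lam2 v - lam1 v\<bar> * sum \<mu>' P \<le> 1 / b * (2 * D)" .
  have "\<bar>lam2 v - lam1 v\<bar> * b \<le> \<bar>lam2 v - lam1 v\<bar> * (lam1 v * sum \<mu>' P)"
    using mass by (intro mult_left_mono) auto
  also have "\<dots> = lam1 v * (\<bar>lam2 v - lam1 v\<bar> * sum \<mu>' P)"
    by simp
  also have "\<dots> \<le> lam1 v * (1 / b * (2 * D))"
    using diff lam by (intro mult_left_mono) auto
  finally have "\<bar>lam2 v - lam1 v\<bar> * b \<le> lam1 v * (2 * D / b)"
    by simp
  then have "\<bar>lam2 v - lam1 v\<bar> / lam1 v \<le> 2 * D / b\<^sup>2"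
    using lam b by (simp add: field_simps power2_eq_square)
  moreover have "\<bar>lam2 v / lam1 v - 1\<bar> = \<bar>lam2 v - lam1 v\<bar> / lam1 v"
    using lam by (simp add: field_simps)
  ultimately show ?thesis
    by (simp add: D_def \<mu>_def \<nu>_def)
qed

lemma activity_ratio_le_d_par:
  assumes finV: "finite V" and irr: "\<And>v. \<not> E v v" and soft1: "soft V lam1"
    and mb1: "marginally_bounded V (gibbs V E lam1) b" and b: "b < 1" and v: "v \<in> V"
    and dpar: "d_par V lam1 lam2 \<le> b / (2 * (1 - b) * real (card V))"
  shows "\<bar>lam2 v / lam1 v - 1\<bar> \<le> 1 / (2 * real (card V))"
proof -
  have lam: "0 < lam1 v"
    using soft1 v by (simp add: soft_def)
  have n: "0 < real (card V)"
    using finV v card_gt_0_iff by auto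
  have c: "0 < 2 * (1 - b) * real (card V)"
    using b n by simp
  have "\<bar>lam2 v - lam1 v\<bar> \<le> d_par V lam1 lam2"
    unfolding d_par_def using finV v by (subst abs_minus_commute) (intro Max_ge, auto)
  then have "\<bar>lam2 v - lam1 v\<bar> \<le> b / (2 * (1 - b) * real (card V))"
    using dpar by linarith
  then have "\<bar>lam2 v - lam1 v\<bar> * (2 * (1 - b) * real (card V)) \<le> b"
    by (rule pos_le_divide_eq[OF c, THEN iffD1])
  then have "\<bar>lam2 v - lam1 v\<bar> * (2 * real (card V)) * (1 - b) \<le> b"
    by (simp add: algebra_simps)
  also have "b \<le> lam1 v * (1 - b)"
    using marginally_bounded_activity_bounds(1)[OF finV irr soft1 mb1 v] by (simp add: algebra_simps)
  finally have "\<bar>lam2 v - lam1 v\<bar> * (2 * real (card V)) \<le> lam1 v"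
    using b by (simp add: mult_le_cancel_right)
  moreover have "\<bar>lam2 v / lam1 v - 1\<bar> = \<bar>lam2 v - lam1 v\<bar> / lam1 v"
    using lam by (simp add: field_simps)
  ultimately show ?thesis
    using lam n by (simp add: field_simps)
qed

lemma one_plus_power_le:
  fixes d :: real
  assumes "0 \<le> d" "real k * d \<le> 1/2"
  shows "(1 + d) ^ k \<le> 1 + 2 * real k * d"
  using assms(2)
proof (induction k)
  case 0
  then show ?case by simp
next
  case (Suc k)
  then have kd: "real k * d \<le> 1/2"
    using assms(1) by (simp add: algebra_simps)
  have "(1 + d) ^ Suc k \<le> (1 + d) * (1 + 2 * real k * d)"
    using Suc.IH[OF kd] assms(1) by (simp add: mult_left_mono)
  also have "\<dots> = 1 + (2 * real k + 1) * d + 2 * (real k * d) * d"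
    by (simp add: algebra_simps)
  also have "\<dots> \<le> 1 + 2 * real (Suc k) * d"
    using mult_right_mono[OF kd assms(1)] by (simp add: algebra_simps)
  finally show ?case .
qed

lemma prod_close_to_one:
  fixes r :: "'a \<Rightarrow> real"
  assumes "finite S" and r: "\<And>v. v \<in> S \<Longrightarrow> \<bar>r v - 1\<bar> \<le> \<delta>" and small: "real (card S) * \<delta> \<le> 1/2"
  shows "1 - real (card S) * \<delta> \<le> prod r S \<and> prod r S \<le> 1 + 2 * real (card S) * \<delta>"
proof (cases "S = {}")
  case False
  then obtain v where "v \<in> S"
    by blast
  then have \<delta>: "0 \<le> \<delta>"
    using r[of v] by linarith
  have "1 \<le> real (card S)"
    using False \<open>finite S\<close> by (simp add: Suc_leI card_gt_0_iff)
  then have "\<delta> \<le> 1"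
    using small \<delta> mult_right_mono[of 1 "real (card S)" \<delta>] by linarith
  have "1 + real (card S) * - \<delta> \<le> (1 - \<delta>) ^ card S"
    using Bernoulli_inequality[of "- \<delta>"] \<open>\<delta> \<le> 1\<close> by simp
  also have "\<dots> = (\<Prod>v\<in>S. 1 - \<delta>)"
    by simp
  also have "\<dots> \<le> prod r S"
    using r \<open>\<delta> \<le> 1\<close> by (intro prod_mono) (fastforce simp: abs_le_iff)+
  finally have "1 - real (card S) * \<delta> \<le> prod r S"
    by simp
  moreover have "prod r S \<le> (\<Prod>v\<in>S. 1 + \<delta>)"
    using r \<open>\<delta> \<le> 1\<close> by (intro prod_mono) (fastforce simp: abs_le_iff)
  then have "prod r S \<le> 1 + 2 * real (card S) * \<delta>"
    using one_plus_power_le[OF \<delta> small] by simp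
  ultimately show ?thesis ..
qed simp

lemma marginally_bounded_le_half:
  assumes "finite V" "\<And>v. \<not> E v v" "soft V lam"
    and "marginally_bounded V (gibbs V E lam) b" and "V \<noteq> {}"
  shows "b \<le> 1/2"
proof -
  obtain v where v: "v \<in> V"
    using assms(5) by blast
  have "b + b * lam v \<le> lam v" "b + b * lam v \<le> 1"
    using marginally_bounded_activity_bounds[OF assms(1-4) v] by (simp_all add: distrib_left)
  then have "(2 * b) * (1 + lam v) \<le> 1 * (1 + lam v)"
    by (simp add: algebra_simps)
  moreover have "0 < 1 + lam v"
    using assms(3) v by (simp add: soft_def add_pos_pos)
  ultimately show ?thesis
    by (simp add: mult_le_cancel_right)
qed

lemma activity_ratio_le:
  assumes finV: "finite V" and irr: "\<And>v. \<not> E v v" and b: "0 < b" "b < 1"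
    and soft1: "soft V lam1" and soft2: "soft V lam2"
    and mb1: "marginally_bounded V (gibbs V E lam1) b"
    and mb2: "marginally_bounded V (gibbs V E lam2) b"
    and dpar: "d_par V lam1 lam2 \<le> b / (2 * (1 - b) * real (card V))" and v: "v \<in> V"
  shows "\<bar>lam2 v / lam1 v - 1\<bar>
           \<le> min (d_tv V (gibbs V E lam1) (gibbs V E lam2) / b ^ 4) (1 / (2 * real (card V)))"
proof -
  define D where "D = d_tv V (gibbs V E lam1) (gibbs V E lam2)"
  have "b + b * lam2 v \<le> 1"
    using marginally_bounded_activity_bounds(2)[OF finV irr soft2 mb2 v] by (simp add: distrib_left)
  then have "b * lam2 v \<le> 1"
    using b by linarith
  then have "lam2 v \<le> 1 / b"
    using b by (simp add: field_simps)
  then have "\<bar>lam2 v / lam1 v - 1\<bar> \<le> 2 * D / b\<^sup>2"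
    unfolding D_def using activity_ratio_le_d_tv[OF finV irr soft1 soft2 mb1 v] b by simp
  also have "\<dots> = (2 * b\<^sup>2) * D / b ^ 4"
    using b by (simp add: field_simps eval_nat_numeral)
  also have "\<dots> \<le> 1 * D / b ^ 4"
  proof (intro divide_right_mono mult_right_mono)
    have "b \<le> 1/2"
      using marginally_bounded_le_half[OF finV irr soft1 mb1] v by blast
    then have "b * b \<le> 1/2 * (1/2)"
      using b by (intro mult_mono) auto
    then show "2 * b\<^sup>2 \<le> 1"
      by (simp add: power2_eq_square)
    show "0 \<le> D"
      by (simp add: D_def d_tv_def sum_nonneg)
  qed simp
  finally show ?thesis
    using activity_ratio_le_d_par[OF finV irr soft1 mb1 b(2) v dpar] by (simp add: D_def)
qed

lemma weight_ratio_bounds: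
  assumes "finite V" "0 \<le> \<delta>" and r: "\<And>v. v \<in> V \<Longrightarrow> \<bar>lam2 v / lam1 v - 1\<bar> \<le> \<delta>"
    and small: "real (card V) * \<delta> \<le> 1/2" and ind: "independent E (occupied V \<sigma>)"
  defines "W \<equiv> hc_weight V E lam2 \<sigma> / hc_weight V E lam1 \<sigma>"
  shows "1/2 \<le> W \<and> \<bar>W - 1\<bar> \<le> 2 * real (card V) * \<delta>"
proof -
  define S where "S = occupied V \<sigma>"
  have "finite S"
    unfolding S_def using assms(1) occupied_subset by (rule finite_subset[rotated])
  have "card S \<le> card V"
    unfolding S_def using assms(1) occupied_subset by (rule card_mono)
  then have k: "real (card S) * \<delta> \<le> real (card V) * \<delta>"
    using assms(2) by (intro mult_right_mono) simp_all
  have "v \<in> S \<Longrightarrow> \<bar>lam2 v / lam1 v - 1\<bar> \<le> \<delta>" for v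
    using r[of v] occupied_subset[of V \<sigma>] unfolding S_def by blast
  moreover have "real (card S) * \<delta> \<le> 1/2"
    using k small by linarith
  ultimately have "1 - real (card S) * \<delta> \<le> (\<Prod>v\<in>S. lam2 v / lam1 v)"
    and "(\<Prod>v\<in>S. lam2 v / lam1 v) \<le> 1 + 2 * (real (card S) * \<delta>)"
    using prod_close_to_one[OF \<open>finite S\<close>] by (simp_all add: mult.assoc)
  moreover have "W = (\<Prod>v\<in>S. lam2 v / lam1 v)"
    unfolding W_def S_def using ind by (rule hc_weight_ratio)
  ultimately show ?thesis
    using k small assms(2) unfolding abs_le_iff by (intro conjI; linarith)
qed

definition pmf_on :: "'a set \<Rightarrow> (('a \<Rightarrow> int) \<Rightarrow> real) \<Rightarrow> bool" where
  "pmf_on V p \<longleftrightarrow> (\<forall>\<sigma>\<in>configs V. 0 \<le> p \<sigma>) \<and> sum p (configs V) = 1"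

lemma pmf_on_gibbs: "finite V \<Longrightarrow> soft V lam \<Longrightarrow> pmf_on V (gibbs V E lam)"
  by (simp add: pmf_on_def gibbs_nonneg sum_gibbs)

lemma sum_support_eq_1:
  assumes "pmf_on V p"
  shows "sum p {\<sigma>\<in>configs V. 0 < p \<sigma>} = 1"
proof -
  have "finite (configs V)"
    using assms sum.infinite by (fastforce simp: pmf_on_def)
  then have "sum p {\<sigma>\<in>configs V. 0 < p \<sigma>} = sum p (configs V)"
    using assms by (intro sum.mono_neutral_left) (auto simp: pmf_on_def less_le)
  then show ?thesis
    using assms by (simp add: pmf_on_def)
qed

lemma expect_ge_const:
  assumes "pmf_on V p" and "\<And>\<sigma>. \<sigma> \<in> configs V \<Longrightarrow> 0 < p \<sigma> \<Longrightarrow> c \<le> X \<sigma>"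
  shows "c \<le> expect V p X"
proof -
  have "c = (\<Sum>\<sigma>\<in>{\<sigma>\<in>configs V. 0 < p \<sigma>}. p \<sigma> * c)"
    using sum_support_eq_1[OF assms(1)] by (simp flip: sum_distrib_right)
  also have "\<dots> \<le> expect V p X"
    unfolding expect_def using assms(2) by (intro sum_mono mult_left_mono) auto
  finally show ?thesis .
qed

lemma expect_le_const:
  assumes "pmf_on V p" and "\<And>\<sigma>. \<sigma> \<in> configs V \<Longrightarrow> 0 < p \<sigma> \<Longrightarrow> X \<sigma> \<le> c"
  shows "expect V p X \<le> c"
proof -
  have "expect V p X \<le> (\<Sum>\<sigma>\<in>{\<sigma>\<in>configs V. 0 < p \<sigma>}. p \<sigma> * c)"
    unfolding expect_def using assms(2) by (intro sum_mono mult_left_mono) auto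
  also have "\<dots> = c"
    using sum_support_eq_1[OF assms(1)] by (simp flip: sum_distrib_right)
  finally show ?thesis .
qed

lemma sqrt_variance_le:
  assumes "pmf_on V p" "0 \<le> a" and X: "\<And>\<sigma>. \<sigma> \<in> configs V \<Longrightarrow> 0 < p \<sigma> \<Longrightarrow> \<bar>X \<sigma> - c\<bar> \<le> a"
  shows "sqrt (variance V p X) \<le> 2 * a"
proof -
  have X': "c - a \<le> X \<sigma> \<and> X \<sigma> \<le> c + a" if "\<sigma> \<in> configs V" "0 < p \<sigma>" for \<sigma>
    using X[OF that] by (auto simp: abs_le_iff)
  have "c - a \<le> expect V p X"
    using X' by (intro expect_ge_const[OF assms(1)]) blast
  moreover have "expect V p X \<le> c + a"
    using X' by (intro expect_le_const[OF assms(1)]) blast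
  ultimately have "\<bar>expect V p X - c\<bar> \<le> a"
    by (simp add: abs_le_iff)
  then have "\<bar>X \<sigma> - expect V p X\<bar> \<le> \<bar>2 * a\<bar>" if "\<sigma> \<in> configs V" "0 < p \<sigma>" for \<sigma>
    using X[OF that] assms(2) by (auto simp: abs_le_iff)
  then have "(X \<sigma> - expect V p X)\<^sup>2 \<le> (2 * a)\<^sup>2" if "\<sigma> \<in> configs V" "0 < p \<sigma>" for \<sigma>
    using that by (simp only: abs_le_square_iff)
  then have "variance V p X \<le> (2 * a)\<^sup>2"
    unfolding variance_def by (rule expect_le_const[OF assms(1)])
  then have "sqrt (variance V p X) \<le> sqrt ((2 * a)\<^sup>2)"
    by (rule real_sqrt_le_mono)
  also have "\<dots> = 2 * a"
    using assms(2) by (simp only: real_sqrt_abs abs_of_nonneg mult_nonneg_nonneg zero_le_numeral)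
  finally show ?thesis .
qed

theorem lemma6p2:
  fixes V :: "'a set" and E :: "'a \<Rightarrow> 'a \<Rightarrow> bool"
    and lam_mu lam_nu :: "'a \<Rightarrow> real" and b :: real
  assumes finV: "finite V"
    and symE: "\<And>u v. E u v \<Longrightarrow> E v u"
    and irrE: "\<And>v. \<not> E v v"
    and b: "0 < b" "b < 1"
    and soft_mu: "soft V lam_mu" and soft_nu: "soft V lam_nu"
    and mb_mu: "marginally_bounded V (gibbs V E lam_mu) b"
    and mb_nu: "marginally_bounded V (gibbs V E lam_nu) b"
    and dpar: "d_par V lam_mu lam_nu \<le> b / (2 * (1 - b) * real (card V))"
  defines "\<mu> \<equiv> gibbs V E lam_mu" and "\<nu> \<equiv> gibbs V E lam_nu"
    and "W \<equiv> (\<lambda>\<sigma>. hc_weight V E lam_nu \<sigma> / hc_weight V E lam_mu \<sigma>)"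
    and "C \<equiv> b ^ 3"
  shows "(\<forall>\<sigma>\<in>configs V. \<mu> \<sigma> = 0 \<longrightarrow> \<nu> \<sigma> = 0)
       \<and> sqrt (variance V \<mu> W) \<le> (4 * real (card V) / (b * C)) * d_tv V \<mu> \<nu>
       \<and> expect V \<mu> W \<ge> 1 / 2"
proof -
  define n where "n = real (card V)"
  define \<delta> where "\<delta> = min (d_tv V \<mu> \<nu> / b ^ 4) (1 / (2 * n))"
  have pmf: "pmf_on V \<mu>"
    unfolding \<mu>_def using finV soft_mu by (rule pmf_on_gibbs)
  have \<delta>: "0 \<le> \<delta>" "n * \<delta> \<le> 1/2"
    using b by (auto simp: \<delta>_def n_def d_tv_def sum_nonneg min_def field_simps)
  have W: "1/2 \<le> W \<sigma> \<and> \<bar>W \<sigma> - 1\<bar> \<le> 2 * n * \<delta>" if "\<sigma> \<in> configs V" "0 < \<mu> \<sigma>" for \<sigma>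
  proof -
    have "independent E (occupied V \<sigma>)"
      using that(2) gibbs_eq_0_iff[OF finV soft_mu, of E \<sigma>] by (auto simp: \<mu>_def)
    then show ?thesis
      unfolding W_def n_def using activity_ratio_le[OF finV irrE b soft_mu soft_nu mb_mu mb_nu dpar] \<delta>
      by (intro weight_ratio_bounds[OF finV]) (auto simp: \<delta>_def n_def \<mu>_def \<nu>_def)
  qed
  have "\<forall>\<sigma>\<in>configs V. \<mu> \<sigma> = 0 \<longrightarrow> \<nu> \<sigma> = 0"
    by (simp add: \<mu>_def \<nu>_def gibbs_eq_0_iff[OF finV soft_mu] gibbs_eq_0_iff[OF finV soft_nu])
  moreover have "1/2 \<le> expect V \<mu> W"
    using W by (intro expect_ge_const[OF pmf]) blast
  moreover have "sqrt (variance V \<mu> W) \<le> 2 * (2 * n * \<delta>)"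
    using W \<delta> by (intro sqrt_variance_le[OF pmf]) (auto simp: n_def)
  moreover have "4 * n * \<delta> \<le> 4 * n * (d_tv V \<mu> \<nu> / (b * C))"
    unfolding \<delta>_def C_def n_def by (intro mult_left_mono) (simp_all add: eval_nat_numeral)
  ultimately show ?thesis
    by (simp add: n_def)
qed

end
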